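(* Let $T_1,\dots,T_k$ be subtrees of a tree $T$ such that $T=T_1\cup\dots\cup T_k$. Then $\operatorname{pw}(T)+1\le \sum_{i=1}^k(\operatorname{pw}(T_i)+1)$.
   Context: $\operatorname{pw}$ denotes pathwidth: the minimum, over all path decompositions (sequences of vertex subsets such that each edge lies in some set and each vertex lies in a non-empty consecutive run of sets), of the maximum set size minus 1. A subtree is a connected subgraph of $T$. *)

theory Defs
  imports Main
begin

definition graph :: "'a set \<Rightarrow> 'a set set \<Rightarrow> bool" where
  "graph V E \<longleftrightarrow> finite V \<and> (\<forall>e\<in>E. card e = 2 \<and> e \<subseteq> V)"

definition reach :: "'a set set \<Rightarrow> 'a \<Rightarrow> 'a \<Rightarrow> bool" where
  "reach E = (\<lambda>u v. {u, v} \<in> E)\<^sup>*\<^sup>*"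

definition connected_graph :: "'a set \<Rightarrow> 'a set set \<Rightarrow> bool" where
  "connected_graph V E \<longleftrightarrow> graph V E \<and> V \<noteq> {} \<and> (\<forall>u\<in>V. \<forall>v\<in>V. reach E u v)"

definition is_cycle :: "'a set set \<Rightarrow> 'a list \<Rightarrow> bool" where
  "is_cycle E cs \<longleftrightarrow> length cs \<ge> 3 \<and> distinct cs \<and>
     (\<forall>i < length cs. {cs ! i, cs ! (Suc i mod length cs)} \<in> E)"

definition tree :: "'a set \<Rightarrow> 'a set set \<Rightarrow> bool" where
  "tree V E \<longleftrightarrow> connected_graph V E \<and> (\<nexists>cs. is_cycle E cs)"

definition subgraph :: "'a set \<Rightarrow> 'a set set \<Rightarrow> 'a set \<Rightarrow> 'a set set \<Rightarrow> bool" where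
  "subgraph V' E' V E \<longleftrightarrow> graph V' E' \<and> V' \<subseteq> V \<and> E' \<subseteq> E"

definition subtree :: "'a set \<Rightarrow> 'a set set \<Rightarrow> 'a set \<Rightarrow> 'a set set \<Rightarrow> bool" where
  "subtree V' E' V E \<longleftrightarrow> subgraph V' E' V E \<and> connected_graph V' E'"

definition path_decomp :: "'a set \<Rightarrow> 'a set set \<Rightarrow> 'a set list \<Rightarrow> bool" where
  "path_decomp V E B \<longleftrightarrow> B \<noteq> [] \<and> (\<forall>b\<in>set B. b \<subseteq> V) \<and>
     (\<forall>e\<in>E. \<exists>b\<in>set B. e \<subseteq> b) \<and>
     (\<forall>v\<in>V. (\<exists>i<length B. v \<in> B ! i) \<and>
        (\<forall>i j l. i \<le> j \<and> j \<le> l \<and> l < length B \<and> v \<in> B ! i \<and> v \<in> B ! l \<longrightarrow> v \<in> B ! j))"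

definition pd_width :: "'a set list \<Rightarrow> int" where
  "pd_width B = int (Max (card ` set B)) - 1"

definition pathwidth :: "'a set \<Rightarrow> 'a set set \<Rightarrow> int" where
  "pathwidth V E = (LEAST w. \<exists>B. path_decomp V E B \<and> pd_width B = w)"

end

theory Submission
  imports Defs
begin

text \<open>Order the subtrees so that each one meets the union of the previous ones, which is possible
  because T is connected. It then suffices to show pw(A \<union> B) \<le> pw(A) + pw(B) + 1 for a connected
  subgraph A and an arbitrary subgraph B of a forest. Since the forest has no cycles, an edge of B
  between two vertices of A is an edge of A, and every component of B - V(A) has at most one
  neighbour in A; attach each such component to a bag of an optimal path decomposition (X_j) of A
  containing that neighbour. If (Y_t) is an optimal path decomposition of B and C_j is the set of
  vertices outside A attached to X_j, then the bags X_j \<union> (Y_t \<inter> C_j), taken in lexicographic order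
  of (j, t), form a path decomposition of A \<union> B with bags of size at most |X_j| + |Y_t|.\<close>

lemma reach_edge: "{u, v} \<in> E \<Longrightarrow> reach E u v"
  unfolding reach_def by (rule r_into_rtranclp)

lemma reach_trans: "reach E x y \<Longrightarrow> reach E y z \<Longrightarrow> reach E x z"
  unfolding reach_def by (rule rtranclp_trans)

lemma reach_sym: "reach E x y \<Longrightarrow> reach E y x"
  unfolding reach_def
proof (induction rule: rtranclp_induct)
  case (step y z)
  then have "(\<lambda>u v. {u, v} \<in> E) z y" by (simp add: insert_commute)
  then show ?case using step.IH by (rule converse_rtranclp_into_rtranclp)
qed simp

lemma reach_mono:
  assumes "E \<subseteq> E'" "reach E x y"
  shows "reach E' x y"
proof -
  have "(\<lambda>u v. {u, v} \<in> E) \<le> (\<lambda>u v. {u, v} \<in> E')"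
    using assms(1) by auto
  then show ?thesis
    using assms(2) unfolding reach_def by (rule rtranclp_mono[THEN predicate2D])
qed

lemma reach_exits:
  assumes "reach E x y" "x \<in> W" "y \<notin> W"
  shows "\<exists>a b. {a, b} \<in> E \<and> a \<in> W \<and> b \<notin> W"
  using assms unfolding reach_def
proof (induction rule: rtranclp_induct)
  case (step y z)
  then show ?case by (cases "y \<in> W") auto
qed simp

lemma reach_stays_outside:
  assumes "reach E x y" "\<forall>e\<in>E. e \<inter> W = {}" "x \<notin> W"
  shows "y \<notin> W"
proof
  assume "y \<in> W"
  then obtain a b where "{a, b} \<in> E" "a \<in> W"
    using reach_exits[OF reach_sym[OF assms(1)] _ assms(3)] by auto
  then show False
    using assms(2) by auto
qed

lemma rtranclp_imp_distinct_path:
  assumes "r\<^sup>*\<^sup>* x y"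
  shows "\<exists>ps. ps \<noteq> [] \<and> hd ps = x \<and> last ps = y \<and> distinct ps \<and>
           (\<forall>i. Suc i < length ps \<longrightarrow> r (ps ! i) (ps ! Suc i))"
  using assms
proof (induction rule: rtranclp_induct)
  case base
  show ?case by (rule exI[of _ "[x]"]) simp
next
  case (step y z)
  then obtain ps where ps: "ps \<noteq> []" "hd ps = x" "last ps = y" "distinct ps"
    and steps: "\<forall>i. Suc i < length ps \<longrightarrow> r (ps ! i) (ps ! Suc i)"
    by blast
  show ?case
  proof (cases "z \<in> set ps")
    case True
    then obtain i where i: "i < length ps" "ps ! i = z" by (auto simp: in_set_conv_nth)
    have "last (take (Suc i) ps) = z"
      using i by (simp add: take_Suc_conv_app_nth)
    moreover have "\<forall>j. Suc j < length (take (Suc i) ps) \<longrightarrow>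
        r (take (Suc i) ps ! j) (take (Suc i) ps ! Suc j)"
      using steps by simp
    ultimately show ?thesis
      using ps by (intro exI[of _ "take (Suc i) ps"]) simp
  next
    case False
    have "\<forall>i. Suc i < length (ps @ [z]) \<longrightarrow> r ((ps @ [z]) ! i) ((ps @ [z]) ! Suc i)"
    proof (intro allI impI)
      fix i assume i: "Suc i < length (ps @ [z])"
      show "r ((ps @ [z]) ! i) ((ps @ [z]) ! Suc i)"
      proof (cases "Suc i < length ps")
        case True
        then show ?thesis using steps by (simp add: nth_append)
      next
        case False
        then have "i = length ps - 1" using i by simp
        then show ?thesis using ps(1,3) step.hyps(2) by (simp add: nth_append last_conv_nth)
      qed
    qed
    moreover have "ps @ [z] \<noteq> []" "hd (ps @ [z]) = x" "last (ps @ [z]) = z"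
      "distinct (ps @ [z])"
      using ps False by auto
    ultimately show ?thesis
      by blast
  qed
qed

lemma acyclic_edge_is_bridge:
  assumes acyclic: "\<nexists>cs. is_cycle E cs" and uv: "{u, v} \<in> E" "u \<noteq> v"
  shows "\<not> reach (E - {{u, v}}) v u"
proof
  assume "reach (E - {{u, v}}) v u"
  then obtain ps where ps: "ps \<noteq> []" "hd ps = v" "last ps = u" "distinct ps"
    and steps: "\<forall>i. Suc i < length ps \<longrightarrow> {ps ! i, ps ! Suc i} \<in> E - {{u, v}}"
    unfolding reach_def by (blast dest: rtranclp_imp_distinct_path)
  have "length ps \<noteq> 1"
    using ps uv(2) by (metis hd_conv_nth last_conv_nth diff_self_eq_0 One_nat_def)
  moreover have "length ps \<noteq> 2"
  proof
    assume "length ps = 2"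
    then have "{ps ! 0, ps ! 1} = {v, u}"
      using ps by (simp add: hd_conv_nth last_conv_nth)
    then show False
      using steps \<open>length ps = 2\<close> by (auto simp: insert_commute)
  qed
  moreover have "length ps \<noteq> 0"
    using ps(1) by simp
  ultimately have "length ps \<ge> 3"
    by linarith
  \<comment> \<open>the path from v to u, closed up by the edge uv, is a cycle\<close>
  have "is_cycle E ps"
    unfolding is_cycle_def
  proof (intro conjI allI impI)
    fix i assume i: "i < length ps"
    show "{ps ! i, ps ! (Suc i mod length ps)} \<in> E"
    proof (cases "Suc i < length ps")
      case True
      then show ?thesis using steps by auto
    next
      case False
      then have "Suc i = length ps" using i by simp
      then have "i = length ps - 1" "Suc i mod length ps = 0" by auto
      then show ?thesis using ps(1,2,3) uv(1) by (simp add: hd_conv_nth last_conv_nth)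
    qed
  qed (use ps \<open>length ps \<ge> 3\<close> in auto)
  with acyclic show False by blast
qed

lemma acyclic_chord_in_connected:
  assumes acyclic: "\<nexists>cs. is_cycle E cs"
    and A: "connected_graph VA EA" "EA \<subseteq> E"
    and xy: "{x, y} \<in> E" "x \<in> VA" "y \<in> VA" "x \<noteq> y"
  shows "{x, y} \<in> EA"
proof (rule ccontr)
  assume "{x, y} \<notin> EA"
  with A(2) have "EA \<subseteq> E - {{x, y}}" by auto
  moreover have "reach EA y x"
    using A(1) xy(2,3) by (simp add: connected_graph_def)
  ultimately have "reach (E - {{x, y}}) y x" by (rule reach_mono)
  with acyclic_edge_is_bridge[OF acyclic xy(1,4)] show False by blast
qed

lemma acyclic_unique_attachment:
  assumes acyclic: "\<nexists>cs. is_cycle E cs"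
    and A: "connected_graph VA EA" "EA \<subseteq> E"
    and EB_out: "EB_out \<subseteq> E" "\<forall>e\<in>EB_out. e \<inter> VA = {}"
    and d: "d \<notin> VA" "reach EB_out d d1" "reach EB_out d d2"
    and a: "{d1, a1} \<in> E" "{d2, a2} \<in> E" "a1 \<in> VA" "a2 \<in> VA"
  shows "a1 = a2"
proof (rule ccontr)
  assume ne: "a1 \<noteq> a2"
  have d1: "d1 \<notin> VA"
    using reach_stays_outside[OF d(2) EB_out(2) d(1)] .
  define E' where "E' = E - {{a1, d1}}"
  have "EB_out \<subseteq> E'"
    using EB_out a(3) by (auto simp: E'_def)
  moreover have "reach EB_out d1 d2"
    using reach_sym[OF d(2)] d(3) by (rule reach_trans)
  ultimately have "reach E' d1 d2"
    by (rule reach_mono)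
  moreover have "{d2, a2} \<in> E'"
    using a(2,4) ne d1 by (auto simp: E'_def doubleton_eq_iff)
  moreover have "EA \<subseteq> E'"
    using A d1 by (auto simp: E'_def connected_graph_def graph_def)
  then have "reach E' a2 a1"
    using A(1) a(3,4) by (auto simp: connected_graph_def intro: reach_mono)
  ultimately have "reach E' d1 a1"
    by (blast intro: reach_trans reach_edge)
  moreover have "{a1, d1} \<in> E" "a1 \<noteq> d1"
    using a(1,3) d1 by (auto simp: insert_commute)
  ultimately show False
    using acyclic_edge_is_bridge[OF acyclic] by (auto simp: E'_def)
qed

lemma path_decomp_singleton: "graph V E \<Longrightarrow> path_decomp V E [V]"
  unfolding path_decomp_def graph_def by auto

lemma path_decomp_bag_subset: "path_decomp V E B \<Longrightarrow> j < length B \<Longrightarrow> B ! j \<subseteq> V"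
  unfolding path_decomp_def by (meson nth_mem)

lemma path_decomp_vertex: "path_decomp V E B \<Longrightarrow> v \<in> V \<Longrightarrow> \<exists>j<length B. v \<in> B ! j"
  unfolding path_decomp_def by blast

lemma path_decomp_edge: "path_decomp V E B \<Longrightarrow> e \<in> E \<Longrightarrow> \<exists>j<length B. e \<subseteq> B ! j"
  unfolding path_decomp_def by (metis in_set_conv_nth)

lemma path_decomp_interval:
  assumes "path_decomp V E B" "v \<in> V" "i \<le> j" "j \<le> l" "l < length B" "v \<in> B ! i" "v \<in> B ! l"
  shows "v \<in> B ! j"
  using assms unfolding path_decomp_def by blast

lemma pathwidth_attained:
  assumes "path_decomp V E B"
  obtains B0 where "path_decomp V E B0" "pd_width B0 = pathwidth V E"
    and "\<And>B. path_decomp V E B \<Longrightarrow> pathwidth V E \<le> pd_width B"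
proof -
  \<comment> \<open>widths are at least -1, so shifting by one turns them into naturals\<close>
  have width_ge: "pd_width B \<ge> -1" for B :: "'a set list"
    by (simp add: pd_width_def)
  obtain B0 where B0: "path_decomp V E B0"
    and least: "\<forall>B. path_decomp V E B \<longrightarrow> nat (pd_width B0 + 1) \<le> nat (pd_width B + 1)"
    using ex_has_least_nat[of "path_decomp V E" B "\<lambda>B. nat (pd_width B + 1)"] assms by blast
  have min: "pd_width B0 \<le> pd_width B" if "path_decomp V E B" for B
    using least that width_ge[of B] width_ge[of B0] by fastforce
  have "pathwidth V E = pd_width B0"
    unfolding pathwidth_def by (rule Least_equality) (use B0 min in auto)
  with B0 min that show thesis by auto
qed

lemma pathwidth_le: "path_decomp V E B \<Longrightarrow> pathwidth V E \<le> pd_width B"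
  by (metis pathwidth_attained)

lemma optimal_path_decomp:
  assumes "graph V E"
  obtains B where "path_decomp V E B" "pd_width B = pathwidth V E"
  by (metis pathwidth_attained path_decomp_singleton assms)

text \<open>Position p encodes the pair of bags (PA ! (p div length PB), PB ! (p mod length PB)), so the pairs
  appear in lexicographic order.\<close>
definition product_decomp :: "'a set \<Rightarrow> ('a \<Rightarrow> nat) \<Rightarrow> 'a set list \<Rightarrow> 'a set list \<Rightarrow> 'a set list" where
  "product_decomp VA f PA PB =
     map (\<lambda>p. PA ! (p div length PB) \<union> {d \<in> PB ! (p mod length PB). d \<notin> VA \<and> f d = p div length PB})
       [0..<length PA * length PB]"

lemma product_position:
  fixes j t m n :: nat
  assumes "j < m" "t < n"
  shows "j * n + t < m * n" "(j * n + t) div n = j" "(j * n + t) mod n = t"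
proof -
  have "j * n + t < Suc j * n" using assms(2) by simp
  also have "\<dots> \<le> m * n" using assms(1) by (intro mult_right_mono) auto
  finally show "j * n + t < m * n" .
  show "(j * n + t) div n = j" "(j * n + t) mod n = t" using assms(2) by auto
qed

lemma product_decomp_length: "length (product_decomp VA f PA PB) = length PA * length PB"
  by (simp add: product_decomp_def)

context
  fixes VA VB :: "'a set" and EA EB :: "'a set set" and PA PB :: "'a set list" and f :: "'a \<Rightarrow> nat"
  assumes PA_decomp: "path_decomp VA EA PA" and PB_decomp: "path_decomp VB EB PB"
begin

lemma product_decomp_mem:
  assumes "p < length PA * length PB"
  shows "v \<in> product_decomp VA f PA PB ! p \<longleftrightarrow>
    (if v \<in> VA then v \<in> PA ! (p div length PB)
     else v \<in> PB ! (p mod length PB) \<and> f v = p div length PB)"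
proof -
  have "p div length PB < length PA"
    using assms by (simp add: less_mult_imp_div_less)
  with PA_decomp have "PA ! (p div length PB) \<subseteq> VA"
    by (rule path_decomp_bag_subset)
  then show ?thesis
    using assms by (auto simp: product_decomp_def)
qed

lemma product_decomp_covers:
  assumes "j < length PA" "t < length PB"
    and "\<And>v. v \<in> e \<Longrightarrow> v \<in> VA \<Longrightarrow> v \<in> PA ! j"
    and "\<And>v. v \<in> e \<Longrightarrow> v \<notin> VA \<Longrightarrow> v \<in> PB ! t \<and> f v = j"
  shows "\<exists>b\<in>set (product_decomp VA f PA PB). e \<subseteq> b"
proof -
  let ?p = "j * length PB + t"
  have p: "?p < length PA * length PB" "?p div length PB = j" "?p mod length PB = t"
    using product_position[OF assms(1,2)] by blast+
  then have "e \<subseteq> product_decomp VA f PA PB ! ?p"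
    using assms(3,4) by (auto simp: product_decomp_mem)
  moreover have "product_decomp VA f PA PB ! ?p \<in> set (product_decomp VA f PA PB)"
    using p(1) by (simp add: product_decomp_length)
  ultimately show ?thesis by blast
qed

lemma product_decomp_interval:
  assumes "i \<le> j" "j \<le> l" "l < length PA * length PB"
    and "v \<in> product_decomp VA f PA PB ! i" "v \<in> product_decomp VA f PA PB ! l"
  shows "v \<in> product_decomp VA f PA PB ! j"
proof -
  let ?n = "length PB"
  have ij: "i < length PA * ?n" "j < length PA * ?n"
    using assms(1-3) by auto
  have blocks: "i div ?n \<le> j div ?n" "j div ?n \<le> l div ?n" "l div ?n < length PA"
    using assms(1-3) by (simp_all add: div_le_mono less_mult_imp_div_less)
  show ?thesis
  proof (cases "v \<in> VA")
    case True
    then have "v \<in> PA ! (i div ?n)" "v \<in> PA ! (l div ?n)"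
      using assms(3-5) ij by (simp_all add: product_decomp_mem)
    then have "v \<in> PA ! (j div ?n)"
      using path_decomp_interval[OF PA_decomp True blocks] by blast
    then show ?thesis
      using ij True by (simp add: product_decomp_mem)
  next
    case False
    then have i: "v \<in> PB ! (i mod ?n)" "f v = i div ?n"
      and l: "v \<in> PB ! (l mod ?n)" "f v = l div ?n"
      using assms(3-5) ij by (simp_all add: product_decomp_mem)
    then have j: "j div ?n = f v"
      using blocks by simp
    have "i = f v * ?n + i mod ?n" "j = f v * ?n + j mod ?n" "l = f v * ?n + l mod ?n"
      using i(2) l(2) j by (metis div_mult_mod_eq)+
    then have "i mod ?n \<le> j mod ?n" "j mod ?n \<le> l mod ?n"
      using assms(1,2) by linarith+
    moreover have "l mod ?n < ?n"
      using ij by (cases "?n = 0") auto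
    moreover have "v \<in> VB"
      using l(1) path_decomp_bag_subset[OF PB_decomp \<open>l mod ?n < ?n\<close>] by auto
    ultimately have "v \<in> PB ! (j mod ?n)"
      using path_decomp_interval[OF PB_decomp] i(1) l(1) by blast
    then show ?thesis
      using ij False j by (simp add: product_decomp_mem)
  qed
qed

lemma pd_width_product_decomp:
  assumes "finite VB"
  shows "pd_width (product_decomp VA f PA PB) \<le> pd_width PA + pd_width PB + 1"
proof -
  let ?R = "product_decomp VA f PA PB" and ?n = "length PB"
  define MA where "MA = Max (card ` set PA)"
  define MB where "MB = Max (card ` set PB)"
  have PA_PB_nonempty: "PA \<noteq> []" "PB \<noteq> []"
    using PA_decomp PB_decomp by (simp_all add: path_decomp_def)
  have "card (?R ! p) \<le> MA + MB" if p: "p < length ?R" for p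
  proof -
    have pA: "p div ?n < length PA" and pB: "p mod ?n < ?n"
      using p PA_PB_nonempty by (simp_all add: product_decomp_length less_mult_imp_div_less)
    have "finite (PB ! (p mod ?n))"
      using path_decomp_bag_subset[OF PB_decomp pB] assms by (rule finite_subset)
    then have "card {d \<in> PB ! (p mod ?n). d \<notin> VA \<and> f d = p div ?n} \<le> card (PB ! (p mod ?n))"
      by (intro card_mono) auto
    moreover have "card (?R ! p) \<le> card (PA ! (p div ?n)) + card {d \<in> PB ! (p mod ?n). d \<notin> VA \<and> f d = p div ?n}"
      using p by (simp add: product_decomp_def card_Un_le)
    moreover have "card (PA ! (p div ?n)) \<le> MA" "card (PB ! (p mod ?n)) \<le> MB"
      using pA pB by (auto simp: MA_def MB_def)
    ultimately show ?thesis by linarith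
  qed
  moreover have "?R \<noteq> []"
    using PA_PB_nonempty by (simp add: product_decomp_def)
  ultimately have "Max (card ` set ?R) \<le> MA + MB"
    by (auto simp: in_set_conv_nth)
  then show ?thesis
    by (simp add: pd_width_def MA_def MB_def)
qed

lemma product_decomp_covers_PA_bag:
  assumes "j < length PA" "e \<subseteq> PA ! j"
  shows "\<exists>b\<in>set (product_decomp VA f PA PB). e \<subseteq> b"
proof -
  have "0 < length PB"
    using PB_decomp by (simp add: path_decomp_def)
  then show ?thesis
    using assms path_decomp_bag_subset[OF PA_decomp assms(1)]
    by (intro product_decomp_covers[of j 0]) auto
qed

lemma product_decomp_covers_PB_bag:
  assumes "j < length PA" "t < length PB" "e \<subseteq> PB ! t" "\<And>v. v \<in> e \<Longrightarrow> v \<notin> VA \<and> f v = j"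
  shows "\<exists>b\<in>set (product_decomp VA f PA PB). e \<subseteq> b"
  using assms by (intro product_decomp_covers[of j t]) auto

lemma product_decomp_covers_vertex:
  assumes "v \<in> VA \<union> VB" "v \<notin> VA \<Longrightarrow> f v < length PA"
  shows "\<exists>p<length (product_decomp VA f PA PB). v \<in> product_decomp VA f PA PB ! p"
proof -
  have "\<exists>b\<in>set (product_decomp VA f PA PB). {v} \<subseteq> b"
  proof (cases "v \<in> VA")
    case True
    then obtain j where "j < length PA" "v \<in> PA ! j"
      using path_decomp_vertex[OF PA_decomp] by blast
    then show ?thesis
      by (intro product_decomp_covers_PA_bag) auto
  next
    case False
    then obtain t where "t < length PB" "v \<in> PB ! t"
      using assms(1) path_decomp_vertex[OF PB_decomp] by blast
    then show ?thesis
      using False assms(2) by (intro product_decomp_covers_PB_bag) auto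
  qed
  then show ?thesis
    by (auto simp: in_set_conv_nth)
qed

lemma product_decomp_covers_edge:
  assumes "graph VB EB" "e \<in> EA \<union> EB"
    and attach_range: "\<And>d. d \<in> VB \<Longrightarrow> d \<notin> VA \<Longrightarrow> f d < length PA"
    and inside: "\<And>x y. {x, y} \<in> EB \<Longrightarrow> x \<in> VA \<Longrightarrow> y \<in> VA \<Longrightarrow> {x, y} \<in> EA"
    and attach: "\<And>x y. {x, y} \<in> EB \<Longrightarrow> x \<in> VA \<Longrightarrow> y \<notin> VA \<Longrightarrow> x \<in> PA ! f y"
    and outside: "\<And>x y. {x, y} \<in> EB \<Longrightarrow> x \<notin> VA \<Longrightarrow> y \<notin> VA \<Longrightarrow> f x = f y"
  shows "\<exists>b\<in>set (product_decomp VA f PA PB). e \<subseteq> b"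
proof -
  have cover_A: "\<exists>b\<in>set (product_decomp VA f PA PB). e \<subseteq> b" if "e \<in> EA" for e
    using path_decomp_edge[OF PA_decomp that] product_decomp_covers_PA_bag by blast
  have cover_attached: "\<exists>b\<in>set (product_decomp VA f PA PB). {x, y} \<subseteq> b"
    if xy: "{x, y} \<in> EB" "x \<in> VA" "y \<notin> VA" for x y
  proof -
    have "y \<in> VB"
      using \<open>graph VB EB\<close> xy(1) by (auto simp: graph_def)
    then obtain t where "t < length PB" "y \<in> PB ! t"
      using path_decomp_vertex[OF PB_decomp] by blast
    then show ?thesis
      using xy attach attach_range[OF \<open>y \<in> VB\<close>] by (intro product_decomp_covers[of "f y" t]) auto
  qed
  have cover_outside: "\<exists>b\<in>set (product_decomp VA f PA PB). {x, y} \<subseteq> b"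
    if xy: "{x, y} \<in> EB" "x \<notin> VA" "y \<notin> VA" for x y
  proof -
    have "x \<in> VB"
      using \<open>graph VB EB\<close> xy(1) by (auto simp: graph_def)
    obtain t where "t < length PB" "{x, y} \<subseteq> PB ! t"
      using path_decomp_edge[OF PB_decomp xy(1)] by blast
    then show ?thesis
      using xy outside attach_range[OF \<open>x \<in> VB\<close>] by (intro product_decomp_covers_PB_bag) auto
  qed
  show ?thesis
  proof (cases "e \<in> EA")
    case False
    with assms(2) obtain x y where e: "e = {x, y}" "{x, y} \<in> EB"
      using \<open>graph VB EB\<close> unfolding graph_def by (metis UnE card_2_iff)
    then consider "x \<in> VA" "y \<in> VA" | "x \<in> VA" "y \<notin> VA" | "x \<notin> VA" "y \<in> VA"
      | "x \<notin> VA" "y \<notin> VA"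
      by blast
    then show ?thesis
      using e cover_A[OF inside] cover_attached cover_attached[of y x] cover_outside
      by cases (simp_all add: insert_commute)
  qed (rule cover_A)
qed

lemma path_decomp_product:
  assumes "graph VB EB"
    and attach_range: "\<And>d. d \<in> VB \<Longrightarrow> d \<notin> VA \<Longrightarrow> f d < length PA"
    and inside: "\<And>x y. {x, y} \<in> EB \<Longrightarrow> x \<in> VA \<Longrightarrow> y \<in> VA \<Longrightarrow> {x, y} \<in> EA"
    and attach: "\<And>x y. {x, y} \<in> EB \<Longrightarrow> x \<in> VA \<Longrightarrow> y \<notin> VA \<Longrightarrow> x \<in> PA ! f y"
    and outside: "\<And>x y. {x, y} \<in> EB \<Longrightarrow> x \<notin> VA \<Longrightarrow> y \<notin> VA \<Longrightarrow> f x = f y"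
  shows "path_decomp (VA \<union> VB) (EA \<union> EB) (product_decomp VA f PA PB)"
proof -
  let ?R = "product_decomp VA f PA PB"
  have PB_nonempty: "0 < length PB"
    using PB_decomp by (simp add: path_decomp_def)
  have bags: "b \<subseteq> VA \<union> VB" if "b \<in> set ?R" for b
  proof
    fix v assume "v \<in> b"
    with that obtain p where "p < length PA * length PB" "v \<in> ?R ! p"
      by (auto simp: in_set_conv_nth product_decomp_length)
    then show "v \<in> VA \<union> VB"
      using path_decomp_bag_subset[OF PB_decomp, of "p mod length PB"] PB_nonempty
      by (auto simp: product_decomp_mem split: if_splits)
  qed
  show ?thesis
    unfolding path_decomp_def
  proof (intro conjI ballI)
    show "?R \<noteq> []"
      using PA_decomp PB_nonempty by (simp add: path_decomp_def product_decomp_def)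
    show "b \<subseteq> VA \<union> VB" if "b \<in> set ?R" for b
      using that by (rule bags)
    show "\<exists>b\<in>set ?R. e \<subseteq> b" if "e \<in> EA \<union> EB" for e
      using product_decomp_covers_edge[OF assms(1) that attach_range inside attach outside] .
    show "\<exists>p<length ?R. v \<in> ?R ! p" if "v \<in> VA \<union> VB" for v
      using that attach_range by (intro product_decomp_covers_vertex) auto
    show "\<forall>i j l. i \<le> j \<and> j \<le> l \<and> l < length ?R \<and> v \<in> ?R ! i \<and> v \<in> ?R ! l
        \<longrightarrow> v \<in> ?R ! j" for v
      using product_decomp_interval by (auto simp: product_decomp_length)
  qed
qed

end

definition anchors :: "'a set \<Rightarrow> 'a set set \<Rightarrow> 'a \<Rightarrow> 'a set" where
  "anchors VA EB d = {a \<in> VA. \<exists>d'. reach {e \<in> EB. e \<inter> VA = {}} d d' \<and> {d', a} \<in> EB}"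

lemma anchors_edge: "{x, y} \<in> EB \<Longrightarrow> x \<in> VA \<Longrightarrow> x \<in> anchors VA EB y"
  by (auto simp: anchors_def reach_def insert_commute)

lemma anchors_edge_outside:
  assumes "{x, y} \<in> EB" "x \<notin> VA" "y \<notin> VA"
  shows "anchors VA EB x = anchors VA EB y"
proof -
  have "{x, y} \<in> {e \<in> EB. e \<inter> VA = {}}"
    using assms by auto
  then have "reach {e \<in> EB. e \<inter> VA = {}} x y" "reach {e \<in> EB. e \<inter> VA = {}} y x"
    by (auto intro: reach_edge reach_sym)
  then show ?thesis
    unfolding anchors_def by (blast intro: reach_trans)
qed

lemma acyclic_anchors_subsingleton:
  assumes acyclic: "\<nexists>cs. is_cycle E cs"
    and A: "connected_graph VA EA" "EA \<subseteq> E" and "EB \<subseteq> E" and "d \<notin> VA"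
  obtains a where "anchors VA EB d \<subseteq> {a}"
proof (cases "anchors VA EB d = {}")
  case False
  then obtain a d1 where a: "a \<in> VA" "reach {e \<in> EB. e \<inter> VA = {}} d d1" "{d1, a} \<in> EB"
    by (auto simp: anchors_def)
  have EB_out: "{e \<in> EB. e \<inter> VA = {}} \<subseteq> E" "\<forall>e\<in>{e \<in> EB. e \<inter> VA = {}}. e \<inter> VA = {}"
    using \<open>EB \<subseteq> E\<close> by auto
  have "b = a" if "b \<in> VA" "reach {e \<in> EB. e \<inter> VA = {}} d d2" "{d2, b} \<in> EB" for b d2
    using acyclic_unique_attachment[OF acyclic A EB_out \<open>d \<notin> VA\<close> _ a(2)] that a \<open>EB \<subseteq> E\<close>
    by blast
  then have "anchors VA EB d \<subseteq> {a}"
    by (auto simp: anchors_def)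
  then show thesis ..
qed blast

lemma acyclic_attachment_function:
  assumes acyclic: "\<nexists>cs. is_cycle E cs"
    and A: "connected_graph VA EA" "EA \<subseteq> E" and "EB \<subseteq> E"
    and PA: "path_decomp VA EA PA"
  obtains f where "\<And>d. d \<notin> VA \<Longrightarrow> f d < length PA"
    and "\<And>x y. {x, y} \<in> EB \<Longrightarrow> x \<in> VA \<Longrightarrow> y \<notin> VA \<Longrightarrow> x \<in> PA ! f y"
    and "\<And>x y. {x, y} \<in> EB \<Longrightarrow> x \<notin> VA \<Longrightarrow> y \<notin> VA \<Longrightarrow> f x = f y"
proof -
  have anchor_bag: "\<exists>j<length PA. anchors VA EB d \<subseteq> PA ! j" if d: "d \<notin> VA" for d
  proof -
    obtain a where a: "anchors VA EB d \<subseteq> {a}"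
      using acyclic_anchors_subsingleton[OF acyclic A \<open>EB \<subseteq> E\<close> d] .
    show ?thesis
    proof (cases "a \<in> VA")
      case True
      then show ?thesis
        using a path_decomp_vertex[OF PA] by blast
    next
      case False
      then have "anchors VA EB d = {}"
        using a by (auto simp: anchors_def)
      then show ?thesis
        using PA by (auto simp: path_decomp_def)
    qed
  qed
  define f where "f d = (SOME j. j < length PA \<and> anchors VA EB d \<subseteq> PA ! j)" for d
  have f: "f d < length PA" "anchors VA EB d \<subseteq> PA ! f d" if "d \<notin> VA" for d
    using someI_ex[OF anchor_bag[OF that]] unfolding f_def by blast+
  show thesis
  proof (rule that[of f])
    show "x \<in> PA ! f y" if "{x, y} \<in> EB" "x \<in> VA" "y \<notin> VA" for x y
      using anchors_edge[OF that(1,2)] f(2)[OF that(3)] by blast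
    show "f x = f y" if "{x, y} \<in> EB" "x \<notin> VA" "y \<notin> VA" for x y
      using anchors_edge_outside[OF that] by (simp add: f_def)
  qed (rule f(1))
qed

lemma pathwidth_Un_le:
  assumes acyclic: "\<nexists>cs. is_cycle E cs"
    and A: "connected_graph VA EA" "EA \<subseteq> E"
    and B: "graph VB EB" "EB \<subseteq> E"
  shows "pathwidth (VA \<union> VB) (EA \<union> EB) \<le> pathwidth VA EA + pathwidth VB EB + 1"
proof -
  obtain PA where PA: "path_decomp VA EA PA" "pd_width PA = pathwidth VA EA"
    using optimal_path_decomp A(1) by (auto simp: connected_graph_def)
  obtain PB where PB: "path_decomp VB EB PB" "pd_width PB = pathwidth VB EB"
    using optimal_path_decomp B(1) by auto
  obtain f where f: "\<And>d. d \<notin> VA \<Longrightarrow> f d < length PA"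
    "\<And>x y. {x, y} \<in> EB \<Longrightarrow> x \<in> VA \<Longrightarrow> y \<notin> VA \<Longrightarrow> x \<in> PA ! f y"
    "\<And>x y. {x, y} \<in> EB \<Longrightarrow> x \<notin> VA \<Longrightarrow> y \<notin> VA \<Longrightarrow> f x = f y"
    using acyclic_attachment_function[OF acyclic A B(2) PA(1)] by blast
  have inside: "{x, y} \<in> EA" if "{x, y} \<in> EB" "x \<in> VA" "y \<in> VA" for x y
  proof -
    have "x \<noteq> y"
      using B(1) that(1) by (auto simp: graph_def)
    then show ?thesis
      using acyclic_chord_in_connected[OF acyclic A] that B(2) by blast
  qed
  have "path_decomp (VA \<union> VB) (EA \<union> EB) (product_decomp VA f PA PB)"
    using path_decomp_product[OF PA(1) PB(1) B(1)] f inside by blast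
  then have "pathwidth (VA \<union> VB) (EA \<union> EB) \<le> pd_width (product_decomp VA f PA PB)"
    by (rule pathwidth_le)
  also have "\<dots> \<le> pd_width PA + pd_width PB + 1"
    using pd_width_product_decomp[OF PA(1) PB(1)] B(1) by (simp add: graph_def)
  finally show ?thesis
    using PA(2) PB(2) by simp
qed

lemma connected_graph_Un:
  assumes "connected_graph V1 E1" "connected_graph V2 E2" "V1 \<inter> V2 \<noteq> {}"
  shows "connected_graph (V1 \<union> V2) (E1 \<union> E2)"
proof -
  obtain c where c: "c \<in> V1" "c \<in> V2"
    using assms(3) by blast
  have "graph (V1 \<union> V2) (E1 \<union> E2)"
    using assms(1,2) by (auto simp: connected_graph_def graph_def)
  moreover have "reach (E1 \<union> E2) c v" if "v \<in> V1 \<union> V2" for v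
    using that assms(1,2) c by (auto simp: connected_graph_def intro: reach_mono)
  then have "reach (E1 \<union> E2) u v" if "u \<in> V1 \<union> V2" "v \<in> V1 \<union> V2" for u v
    using that by (blast intro: reach_trans reach_sym)
  ultimately show ?thesis
    using c by (auto simp: connected_graph_def)
qed

lemma exists_adjacent_piece:
  assumes conn: "connected_graph (\<Union>i\<in>I. Vs i) (\<Union>i\<in>I. Es i)"
    and pieces: "\<And>i. i \<in> I \<Longrightarrow> connected_graph (Vs i) (Es i)"
    and S: "S \<subseteq> I" "S \<noteq> {}" "S \<noteq> I"
  obtains i where "i \<in> I - S" "Vs i \<inter> (\<Union>j\<in>S. Vs j) \<noteq> {}"
proof (rule ccontr)
  let ?W = "\<Union>j\<in>S. Vs j"
  assume "\<not> thesis"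
  with that have disjoint: "Vs i \<inter> ?W = {}" if "i \<in> I - S" for i
    using \<open>i \<in> I - S\<close> by auto
  obtain s where s: "s \<in> S"
    using S(2) by auto
  obtain x where x: "x \<in> Vs s"
    using pieces[of s] S(1) s by (auto simp: connected_graph_def)
  obtain j where j: "j \<in> I - S"
    using S(1,3) by auto
  obtain y where y: "y \<in> Vs j"
    using pieces[of j] j by (auto simp: connected_graph_def)
  have "reach (\<Union>i\<in>I. Es i) x y"
    using conn s x j y S(1) by (auto simp: connected_graph_def)
  moreover have "x \<in> ?W" "y \<notin> ?W"
    using s x disjoint[OF j] y by auto
  ultimately obtain a b where ab: "{a, b} \<in> (\<Union>i\<in>I. Es i)" "a \<in> ?W" "b \<notin> ?W"
    using reach_exits by meson
  then obtain i where i: "i \<in> I" "{a, b} \<in> Es i"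
    by auto
  then have "a \<in> Vs i" "b \<in> Vs i"
    using pieces[OF i(1)] by (auto simp: connected_graph_def graph_def)
  then show False
    using ab(2,3) i(1) disjoint[of i] by (cases "i \<in> S") auto
qed

lemma connected_graph_Union_insert:
  assumes "connected_graph (\<Union>j\<in>S. Vs j) (\<Union>j\<in>S. Es j)" "connected_graph (Vs i) (Es i)"
    and "Vs i \<inter> (\<Union>j\<in>S. Vs j) \<noteq> {}"
  shows "connected_graph (\<Union>j\<in>insert i S. Vs j) (\<Union>j\<in>insert i S. Es j)"
  using connected_graph_Un[OF assms(2,1)] assms(3) by simp

lemma pathwidth_Union_insert_le:
  assumes acyclic: "\<nexists>cs. is_cycle E cs"
    and "connected_graph (\<Union>j\<in>S. Vs j) (\<Union>j\<in>S. Es j)" "(\<Union>j\<in>S. Es j) \<subseteq> E"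
    and "graph (Vs i) (Es i)" "Es i \<subseteq> E"
  shows "pathwidth (\<Union>j\<in>insert i S. Vs j) (\<Union>j\<in>insert i S. Es j)
    \<le> pathwidth (\<Union>j\<in>S. Vs j) (\<Union>j\<in>S. Es j) + pathwidth (Vs i) (Es i) + 1"
proof -
  have "(\<Union>j\<in>insert i S. Vs j) = (\<Union>j\<in>S. Vs j) \<union> Vs i"
    "(\<Union>j\<in>insert i S. Es j) = (\<Union>j\<in>S. Es j) \<union> Es i"
    by auto
  then show ?thesis
    using pathwidth_Un_le[OF assms] by simp
qed

lemma pathwidth_Union_extend_le:
  assumes acyclic: "\<nexists>cs. is_cycle E cs"
    and pieces: "\<And>i. i \<in> I \<Longrightarrow> connected_graph (Vs i) (Es i)" "\<And>i. i \<in> I \<Longrightarrow> Es i \<subseteq> E"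
    and "finite I" and conn: "connected_graph (\<Union>i\<in>I. Vs i) (\<Union>i\<in>I. Es i)"
    and "S \<subseteq> I" "S \<noteq> {}" "connected_graph (\<Union>i\<in>S. Vs i) (\<Union>i\<in>S. Es i)"
  shows "pathwidth (\<Union>i\<in>I. Vs i) (\<Union>i\<in>I. Es i) + 1
    \<le> pathwidth (\<Union>i\<in>S. Vs i) (\<Union>i\<in>S. Es i) + 1 + (\<Sum>i\<in>I - S. pathwidth (Vs i) (Es i) + 1)"
  using assms(6-8)
proof (induction "card (I - S)" arbitrary: S rule: less_induct)
  case less
  show ?case
  proof (cases "S = I")
    case True
    then show ?thesis by simp
  next
    case False
    obtain i where i: "i \<in> I - S" "Vs i \<inter> (\<Union>j\<in>S. Vs j) \<noteq> {}"
      using exists_adjacent_piece[OF conn pieces(1) less.prems(1,2) False] by blast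
    let ?S' = "insert i S"
    have "card (I - ?S') < card (I - S)"
      using i(1) \<open>finite I\<close> by (intro psubset_card_mono) auto
    moreover have "connected_graph (\<Union>j\<in>?S'. Vs j) (\<Union>j\<in>?S'. Es j)"
      using connected_graph_Union_insert[OF less.prems(3) pieces(1)] i by blast
    ultimately have "pathwidth (\<Union>i\<in>I. Vs i) (\<Union>i\<in>I. Es i) + 1
        \<le> pathwidth (\<Union>j\<in>?S'. Vs j) (\<Union>j\<in>?S'. Es j) + 1 + (\<Sum>j\<in>I - ?S'. pathwidth (Vs j) (Es j) + 1)"
      using less.prems(1) i(1) by (intro less.hyps) auto
    moreover have "pathwidth (\<Union>j\<in>?S'. Vs j) (\<Union>j\<in>?S'. Es j)
        \<le> pathwidth (\<Union>j\<in>S. Vs j) (\<Union>j\<in>S. Es j) + pathwidth (Vs i) (Es i) + 1"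
      using less.prems(1) i(1) pieces(2) pieces(1)[of i]
      by (intro pathwidth_Union_insert_le[OF acyclic less.prems(3)]) (auto simp: connected_graph_def)
    moreover have "(\<Sum>j\<in>I - S. pathwidth (Vs j) (Es j) + 1)
        = pathwidth (Vs i) (Es i) + 1 + (\<Sum>j\<in>I - ?S'. pathwidth (Vs j) (Es j) + 1)"
    proof -
      have "I - S = insert i (I - ?S')" "finite (I - ?S')" "i \<notin> I - ?S'"
        using i(1) \<open>finite I\<close> by auto
      then show ?thesis
        by (simp only:) (rule sum.insert)
    qed
    ultimately show ?thesis
      by linarith
  qed
qed

theorem corollary8:
  fixes V :: "'a set" and E :: "'a set set"
    and k :: nat and Vs :: "nat \<Rightarrow> 'a set" and Es :: "nat \<Rightarrow> 'a set set"
  assumes "tree V E"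
    and "\<forall>i<k. subtree (Vs i) (Es i) V E"
    and "V = (\<Union>i<k. Vs i)" and "E = (\<Union>i<k. Es i)"
  shows "pathwidth V E + 1 \<le> (\<Sum>i<k. pathwidth (Vs i) (Es i) + 1)"
proof -
  have acyclic: "\<nexists>cs. is_cycle E cs" and conn: "connected_graph V E"
    using assms(1) by (auto simp: tree_def)
  have pieces: "connected_graph (Vs i) (Es i)" "Es i \<subseteq> E" if "i \<in> {..<k}" for i
    using assms(2) that by (auto simp: subtree_def subgraph_def)
  have "0 < k"
    using conn assms(3) by (auto simp: connected_graph_def)
  have "pathwidth (\<Union>i<k. Vs i) (\<Union>i<k. Es i) + 1 \<le> pathwidth (\<Union>i\<in>{0}. Vs i) (\<Union>i\<in>{0}. Es i) + 1
      + (\<Sum>i\<in>{..<k} - {0}. pathwidth (Vs i) (Es i) + 1)"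
    using \<open>0 < k\<close> pieces conn assms(3,4)
    by (intro pathwidth_Union_extend_le[OF acyclic]) auto
  then have "pathwidth V E + 1
      \<le> pathwidth (Vs 0) (Es 0) + 1 + (\<Sum>i\<in>{..<k} - {0}. pathwidth (Vs i) (Es i) + 1)"
    using assms(3,4) by simp
  also have "\<dots> = (\<Sum>i<k. pathwidth (Vs i) (Es i) + 1)"
    using \<open>0 < k\<close> by (simp add: sum.remove)
  finally show ?thesis .
qed

end
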